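(* Let $\Omega$ be a finite set, $G\le\mathrm{Sym}(\Omega)$ and $1\le k\le |\Omega|$. The following are equivalent: (1) $G$ has the ordered $k$-ut property; (2) for every transformation $t\in T(\Omega)$ of rank $k$, $\langle G,t\rangle=EG$, where $E$ is the set of idempotents of $\langle G,t\rangle$.
   Context: $T(\Omega)$ is the full transformation monoid on $\Omega$, with maps acting on the right; the rank of $t$ is $|\Omega t|$. $\langle G,t\rangle$ is the subsemigroup generated by $G\cup\{t\}$ and $EG=\{eg:e\in E, g\in G\}$. $G$ has the ordered $k$-ut property if for every $k$-tuple $(a_1,\dots,a_k)$ of distinct points of $\Omega$ and every ordered partition $(P_1,\dots,P_k)$ of $\Omega$ into $k$ nonempty parts there is $g\in G$ with $a_ig\in P_i$ for all $i$. *)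

theory Defs
  imports "HOL-Algebra.Bij" "HOL-Library.FuncSet"
begin

text \<open>Transformations of Omega are represented as extensional maps Omega to Omega
 (the elements of extensional_funcset Omega Omega), as in HOL-Algebra's BijGroup.
 Maps act on the right, so the semigroup product s t (first s, then t) is
 compose Omega t s.\<close>

definition rmult :: "'a set \<Rightarrow> ('a \<Rightarrow> 'a) \<Rightarrow> ('a \<Rightarrow> 'a) \<Rightarrow> ('a \<Rightarrow> 'a)" where
  "rmult \<Omega> s t = compose \<Omega> t s"

inductive_set gen_semigroup :: "'a set \<Rightarrow> ('a \<Rightarrow> 'a) set \<Rightarrow> ('a \<Rightarrow> 'a) set"
  for \<Omega> :: "'a set" and S :: "('a \<Rightarrow> 'a) set" where
  gen_base: "s \<in> S \<Longrightarrow> s \<in> gen_semigroup \<Omega> S"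
| gen_mult: "a \<in> gen_semigroup \<Omega> S \<Longrightarrow> b \<in> gen_semigroup \<Omega> S \<Longrightarrow>
      rmult \<Omega> a b \<in> gen_semigroup \<Omega> S"

definition idempotents :: "'a set \<Rightarrow> ('a \<Rightarrow> 'a) set \<Rightarrow> ('a \<Rightarrow> 'a) set" where
  "idempotents \<Omega> S = {e \<in> S. rmult \<Omega> e e = e}"

definition setprod :: "'a set \<Rightarrow> ('a \<Rightarrow> 'a) set \<Rightarrow> ('a \<Rightarrow> 'a) set \<Rightarrow> ('a \<Rightarrow> 'a) set" where
  "setprod \<Omega> E G = {rmult \<Omega> e g | e g. e \<in> E \<and> g \<in> G}"

definition rank :: "'a set \<Rightarrow> ('a \<Rightarrow> 'a) \<Rightarrow> nat" where
  "rank \<Omega> t = card (t ` \<Omega>)"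

definition ordered_ut :: "'a set \<Rightarrow> ('a \<Rightarrow> 'a) set \<Rightarrow> nat \<Rightarrow> bool" where
  "ordered_ut \<Omega> G k \<longleftrightarrow>
    (\<forall>a P. (\<forall>i<k. a i \<in> \<Omega>) \<and> inj_on a {0..<k}
       \<and> (\<forall>i<k. P i \<noteq> {}) \<and> (\<forall>i<k. \<forall>j<k. i \<noteq> j \<longrightarrow> P i \<inter> P j = {})
       \<and> (\<Union>i<k. P i) = \<Omega>
     \<longrightarrow> (\<exists>g\<in>G. \<forall>i<k. g (a i) \<in> P i))"

end

theory Submission
  imports Defs
begin

text \<open>
  Call h an image section of s if h maps each point y of the image of s into its fibre under s.
  An element s of the semigroup generated by G and t either lies in G or has rank m \<le> k. In the
  latter case the ordered m-ut property (obtained from the ordered k-ut property by splitting a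
  part of a partition), applied to the image of s and its fibres, yields an image section h \<in> G;
  then e = s h is idempotent and s = e h', where h' is the inverse of h. Conversely, for distinct
  points a_i and an ordered partition P_i, the map t sending P_i to a_i has rank k; writing
  t = e g with e idempotent, the inverse of g is an image section of t, so it maps a_i into P_i.
\<close>

lemma rmult_apply [simp]: "x \<in> \<Omega> \<Longrightarrow> rmult \<Omega> s t x = t (s x)"
  by (simp add: rmult_def compose_eq)

lemma rmult_extensional: "rmult \<Omega> s t \<in> extensional \<Omega>"
  by (simp add: rmult_def)

lemma rmult_eqI:
  assumes "f \<in> extensional \<Omega>" and "\<And>x. x \<in> \<Omega> \<Longrightarrow> t (s x) = f x"
  shows "rmult \<Omega> s t = f"
  using assms by (intro extensionalityI[OF rmult_extensional]) auto

lemma rmult_PiE: "s \<in> \<Omega> \<rightarrow>\<^sub>E \<Omega> \<Longrightarrow> t \<in> \<Omega> \<rightarrow>\<^sub>E \<Omega> \<Longrightarrow> rmult \<Omega> s t \<in> \<Omega> \<rightarrow>\<^sub>E \<Omega>"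
  by (auto simp: PiE_iff rmult_extensional)

lemma rmult_image: "rmult \<Omega> s t ` \<Omega> = t ` s ` \<Omega>"
  by (auto simp: image_iff)

lemma rank_rmult_le_left: "finite \<Omega> \<Longrightarrow> rank \<Omega> (rmult \<Omega> s t) \<le> rank \<Omega> s"
  unfolding rank_def rmult_image by (intro card_image_le finite_imageI)

lemma rank_rmult_le_right:
  "finite \<Omega> \<Longrightarrow> s ` \<Omega> \<subseteq> \<Omega> \<Longrightarrow> rank \<Omega> (rmult \<Omega> s t) \<le> rank \<Omega> t"
  unfolding rank_def rmult_image by (intro card_mono) auto

context
  fixes \<Omega> :: "'a set" and G :: "('a \<Rightarrow> 'a) set"
  assumes G: "subgroup G (BijGroup \<Omega>)"
begin

lemma subgroup_BijGroup_Bij: "g \<in> G \<Longrightarrow> g \<in> Bij \<Omega>"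
  using subgroup.subset[OF G] by (auto simp: BijGroup_def)

lemma subgroup_BijGroup_PiE: "g \<in> G \<Longrightarrow> g \<in> \<Omega> \<rightarrow>\<^sub>E \<Omega>"
  using Bij_imp_funcset[OF subgroup_BijGroup_Bij] Bij_imp_extensional[OF subgroup_BijGroup_Bij]
  by (auto simp: PiE_iff)

lemma subgroup_BijGroup_id: "(\<lambda>x\<in>\<Omega>. x) \<in> G"
  using subgroup.one_closed[OF G] by (simp add: BijGroup_def)

lemma subgroup_BijGroup_rmult_closed: "g \<in> G \<Longrightarrow> h \<in> G \<Longrightarrow> rmult \<Omega> g h \<in> G"
  using subgroup.m_closed[OF G, of h g] subgroup_BijGroup_Bij
  by (simp add: BijGroup_def rmult_def)

lemma subgroup_BijGroup_inverse:
  assumes "g \<in> G"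
  obtains h where "h \<in> G" "\<And>x. x \<in> \<Omega> \<Longrightarrow> h (g x) = x" "\<And>x. x \<in> \<Omega> \<Longrightarrow> g (h x) = x"
proof
  have g: "g \<in> Bij \<Omega>"
    using assms by (rule subgroup_BijGroup_Bij)
  then have bij: "bij_betw g \<Omega> \<Omega>"
    by (simp add: Bij_def)
  show "(\<lambda>x\<in>\<Omega>. inv_into \<Omega> g x) \<in> G"
    using subgroup.m_inv_closed[OF G assms] inv_BijGroup[OF g] by simp
  show "(\<lambda>x\<in>\<Omega>. inv_into \<Omega> g x) (g x) = x" if "x \<in> \<Omega>" for x
    using that bij bij_betw_imp_inj_on bij_betw_apply by fastforce
  show "g ((\<lambda>x\<in>\<Omega>. inv_into \<Omega> g x) x) = x" if "x \<in> \<Omega>" for x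
    using that bij by (simp add: bij_betw_def f_inv_into_f)
qed

lemma gen_semigroup_insert_cases:
  assumes "finite \<Omega>" and t: "t \<in> \<Omega> \<rightarrow>\<^sub>E \<Omega>" and "s \<in> gen_semigroup \<Omega> (G \<union> {t})"
  shows "s \<in> \<Omega> \<rightarrow>\<^sub>E \<Omega> \<and> (s \<in> G \<or> rank \<Omega> s \<le> rank \<Omega> t)"
  using assms(3)
proof (induction rule: gen_semigroup.induct)
  case (gen_base s)
  then show ?case
    using subgroup_BijGroup_PiE t by auto
next
  case (gen_mult a b)
  have a: "a \<in> \<Omega> \<rightarrow>\<^sub>E \<Omega>" and b: "b \<in> \<Omega> \<rightarrow>\<^sub>E \<Omega>"
    using gen_mult.IH by blast+
  then have "a ` \<Omega> \<subseteq> \<Omega>"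
    by (auto simp: PiE_iff)
  then have "rank \<Omega> (rmult \<Omega> a b) \<le> rank \<Omega> a" "rank \<Omega> (rmult \<Omega> a b) \<le> rank \<Omega> b"
    using \<open>finite \<Omega>\<close> by (simp_all only: rank_rmult_le_left rank_rmult_le_right)
  moreover have "rmult \<Omega> a b \<in> G" if "a \<in> G" "b \<in> G"
    using that by (rule subgroup_BijGroup_rmult_closed)
  ultimately show ?case
    using gen_mult.IH rmult_PiE[OF a b] by (meson le_trans)
qed

end

definition image_section :: "'a set \<Rightarrow> ('a \<Rightarrow> 'a) \<Rightarrow> ('a \<Rightarrow> 'a) \<Rightarrow> bool" where
  "image_section \<Omega> s h \<longleftrightarrow> (\<forall>y\<in>s ` \<Omega>. h y \<in> \<Omega> \<and> s (h y) = y)"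

lemma idempotent_rmult_image_section:
  assumes "image_section \<Omega> s h"
  shows "rmult \<Omega> (rmult \<Omega> s h) (rmult \<Omega> s h) = rmult \<Omega> s h"
  by (rule rmult_eqI[OF rmult_extensional]) (use assms in \<open>simp add: image_section_def\<close>)

lemma rmult_image_section_inverse:
  assumes "s \<in> \<Omega> \<rightarrow>\<^sub>E \<Omega>" and "image_section \<Omega> s h" and "\<And>x. x \<in> \<Omega> \<Longrightarrow> g (h x) = x"
  shows "rmult \<Omega> (rmult \<Omega> s h) g = s"
  by (rule rmult_eqI) (use assms in \<open>auto simp: image_section_def PiE_iff\<close>)

lemma image_section_rmult_idempotent:
  assumes "e ` \<Omega> \<subseteq> \<Omega>" and "rmult \<Omega> e e = e" and "\<And>x. x \<in> \<Omega> \<Longrightarrow> h (g x) = x"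
  shows "image_section \<Omega> (rmult \<Omega> e g) h"
  unfolding image_section_def
proof
  fix y assume "y \<in> rmult \<Omega> e g ` \<Omega>"
  then obtain x where x: "x \<in> \<Omega>" and y: "y = g (e x)"
    by auto
  have "e x \<in> \<Omega>" and "e (e x) = e x"
    using x assms(1) fun_cong[OF assms(2), of x] by auto
  then show "h y \<in> \<Omega> \<and> rmult \<Omega> e g (h y) = y"
    using y assms(3) by simp
qed

definition ordered_partition :: "'a set \<Rightarrow> nat \<Rightarrow> (nat \<Rightarrow> 'a set) \<Rightarrow> bool" where
  "ordered_partition \<Omega> k P \<longleftrightarrow> (\<forall>i<k. P i \<noteq> {}) \<and> (\<forall>i<k. \<forall>j<k. i \<noteq> j \<longrightarrow> P i \<inter> P j = {})
     \<and> (\<Union>i<k. P i) = \<Omega>"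

lemma ordered_ut_altdef:
  "ordered_ut \<Omega> G k \<longleftrightarrow> (\<forall>a P. (\<forall>i<k. a i \<in> \<Omega>) \<longrightarrow> inj_on a {0..<k} \<longrightarrow>
     ordered_partition \<Omega> k P \<longrightarrow> (\<exists>g\<in>G. \<forall>i<k. g (a i) \<in> P i))"
  unfolding ordered_ut_def ordered_partition_def by blast

lemma ordered_partition_part_unique:
  "ordered_partition \<Omega> k P \<Longrightarrow> i < k \<Longrightarrow> j < k \<Longrightarrow> x \<in> P i \<Longrightarrow> x \<in> P j \<Longrightarrow> i = j"
  unfolding ordered_partition_def by blast

lemma ordered_partition_index:
  assumes "ordered_partition \<Omega> k P"
  obtains c where "\<And>x. x \<in> \<Omega> \<Longrightarrow> c x < k \<and> x \<in> P (c x)"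
  using assms unfolding ordered_partition_def by (metis UN_E lessThan_iff)

lemma fibres_ordered_partition:
  assumes "bij_betw a {0..<k} (s ` \<Omega>)"
  shows "ordered_partition \<Omega> k (\<lambda>i. {x \<in> \<Omega>. s x = a i})"
proof -
  have inj: "inj_on a {0..<k}" and img: "a ` {0..<k} = s ` \<Omega>"
    using assms by (auto simp: bij_betw_def)
  have "{x \<in> \<Omega>. s x = a i} \<noteq> {}" if "i < k" for i
  proof -
    have "a i \<in> s ` \<Omega>"
      using that img by auto
    then show ?thesis
      by auto
  qed
  moreover have "{x \<in> \<Omega>. s x = a i} \<inter> {x \<in> \<Omega>. s x = a j} = {}" if "i < k" "j < k" "i \<noteq> j" for i j
    using that inj by (auto simp: inj_on_def)
  moreover have "(\<Union>i<k. {x \<in> \<Omega>. s x = a i}) = \<Omega>"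
    using img by (force simp: image_iff)
  ultimately show ?thesis
    unfolding ordered_partition_def by blast
qed

lemma ordered_partition_split:
  assumes P: "ordered_partition \<Omega> k P" and "j < k" "x \<in> P j" "y \<in> P j" "x \<noteq> y"
  shows "ordered_partition \<Omega> (Suc k) (P(j := {x}, k := P j - {x}))"
proof -
  let ?Q = "P(j := {x}, k := P j - {x})"
  have ne: "\<forall>i<k. P i \<noteq> {}" and dis: "\<forall>i<k. \<forall>i'<k. i \<noteq> i' \<longrightarrow> P i \<inter> P i' = {}"
    and un: "(\<Union>i<k. P i) = \<Omega>"
    using P by (auto simp: ordered_partition_def)
  have "?Q i \<noteq> {}" if "i < Suc k" for i
    using that ne assms(2-5) by (auto simp: less_Suc_eq)
  moreover have "?Q i \<inter> ?Q i' = {}" if "i < Suc k" "i' < Suc k" "i \<noteq> i'" for i i'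
    using that dis assms(2,3) by (auto simp: less_Suc_eq)
  moreover have "(\<Union>i<Suc k. ?Q i) = \<Omega>"
  proof -
    have "(\<Union>i<Suc k. ?Q i) = (\<Union>i\<in>{..<k} - {j}. P i) \<union> {x} \<union> (P j - {x})"
      using assms(2) by (auto simp: lessThan_Suc)
    also have "\<dots> = (\<Union>i<k. P i)"
      using assms(2,3) by blast
    finally show ?thesis
      using un by simp
  qed
  ultimately show ?thesis
    unfolding ordered_partition_def by blast
qed

lemma ordered_partition_nontrivial_part:
  assumes "finite \<Omega>" and P: "ordered_partition \<Omega> k P" and "k < card \<Omega>"
  obtains j x y where "j < k" "x \<in> P j" "y \<in> P j" "x \<noteq> y"
proof -
  have "\<exists>j<k. \<exists>x\<in>P j. \<exists>y\<in>P j. x \<noteq> y"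
  proof (rule ccontr)
    assume trivial: "\<not> (\<exists>j<k. \<exists>x\<in>P j. \<exists>y\<in>P j. x \<noteq> y)"
    have un: "(\<Union>i<k. P i) = \<Omega>"
      using P by (simp add: ordered_partition_def)
    have "card (P i) \<le> 1" if "i < k" for i
    proof -
      have "finite (P i)"
        using that un \<open>finite \<Omega>\<close> by (metis UN_upper finite_subset lessThan_iff)
      then show ?thesis
        using that trivial by (auto simp: card_le_Suc0_iff_eq)
    qed
    then have "(\<Sum>i<k. card (P i)) \<le> k"
      using sum_bounded_above[of "{..<k}" "\<lambda>i. card (P i)" 1] by simp
    moreover have "card \<Omega> \<le> (\<Sum>i<k. card (P i))"
      using card_UN_le[of "{..<k}" P] un by simp
    ultimately show False
      using \<open>k < card \<Omega>\<close> by simp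
  qed
  then show thesis
    using that by blast
qed

lemma ordered_ut_SucD:
  assumes "finite \<Omega>" and "Suc k \<le> card \<Omega>" and ut: "ordered_ut \<Omega> G (Suc k)"
  shows "ordered_ut \<Omega> G k"
  unfolding ordered_ut_altdef
proof (intro allI impI)
  fix a P
  assume a: "\<forall>i<k. a i \<in> \<Omega>" and inj: "inj_on a {0..<k}" and P: "ordered_partition \<Omega> k P"
  obtain j x y where j: "j < k" and xy: "x \<in> P j" "y \<in> P j" "x \<noteq> y"
    using ordered_partition_nontrivial_part[OF \<open>finite \<Omega>\<close> P] assms(2) by auto
  have "card (a ` {0..<k}) < card \<Omega>"
    using card_image[OF inj] assms(2) by simp
  then have "\<not> \<Omega> \<subseteq> a ` {0..<k}"
    using card_mono[of "a ` {0..<k}" \<Omega>] by auto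
  then obtain b where b: "b \<in> \<Omega>" "b \<notin> a ` {0..<k}"
    by blast
  let ?a = "a(k := b)" and ?P = "P(j := {x}, k := P j - {x})"
  have "\<forall>i<Suc k. ?a i \<in> \<Omega>"
    using a b by (simp add: less_Suc_eq)
  moreover have "inj_on ?a {0..<Suc k}"
    using inj b by (auto simp: inj_on_def less_Suc_eq)
  moreover have "ordered_partition \<Omega> (Suc k) ?P"
    using ordered_partition_split[OF P j xy] .
  ultimately obtain g where g: "g \<in> G" "\<forall>i<Suc k. g (?a i) \<in> ?P i"
    using ut unfolding ordered_ut_altdef by blast
  have "g (a i) \<in> P i" if "i < k" for i
    using g(2)[rule_format, of i] that xy by (auto split: if_splits)
  then show "\<exists>g\<in>G. \<forall>i<k. g (a i) \<in> P i"
    using g(1) by blast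
qed

lemma ordered_ut_antimono:
  assumes "finite \<Omega>" and "m \<le> k"
  shows "k \<le> card \<Omega> \<Longrightarrow> ordered_ut \<Omega> G k \<Longrightarrow> ordered_ut \<Omega> G m"
  using assms(2)
proof (induction k rule: dec_induct)
  case (step n)
  then show ?case
    using ordered_ut_SucD[OF \<open>finite \<Omega>\<close>] by simp
qed

lemma ordered_ut_imp_image_section:
  assumes "finite \<Omega>" and "s ` \<Omega> \<subseteq> \<Omega>" and ut: "ordered_ut \<Omega> G (rank \<Omega> s)"
  obtains h where "h \<in> G" "image_section \<Omega> s h"
proof -
  obtain a where a: "bij_betw a {0..<rank \<Omega> s} (s ` \<Omega>)"
    using ex_bij_betw_nat_finite[OF finite_imageI[OF \<open>finite \<Omega>\<close>]] unfolding rank_def by blast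
  then have img: "a ` {0..<rank \<Omega> s} = s ` \<Omega>"
    by (simp add: bij_betw_def)
  then have "a ` {0..<rank \<Omega> s} \<subseteq> \<Omega>"
    using assms(2) by simp
  then have "\<forall>i<rank \<Omega> s. a i \<in> \<Omega>"
    by auto
  then obtain h where h: "h \<in> G" "\<forall>i<rank \<Omega> s. h (a i) \<in> {x \<in> \<Omega>. s x = a i}"
    using ut fibres_ordered_partition[OF a] bij_betw_imp_inj_on[OF a]
    unfolding ordered_ut_altdef by blast
  have "image_section \<Omega> s h"
    unfolding image_section_def
  proof
    fix y assume "y \<in> s ` \<Omega>"
    then have "y \<in> a ` {0..<rank \<Omega> s}"
      using img by simp
    then obtain i where "i < rank \<Omega> s" "y = a i"
      by auto
    then show "h y \<in> \<Omega> \<and> s (h y) = y"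
      using h(2) by simp
  qed
  with h(1) show thesis
    using that by blast
qed

lemma image_sections_imp_ordered_ut:
  assumes sections: "\<And>t. t \<in> \<Omega> \<rightarrow>\<^sub>E \<Omega> \<Longrightarrow> rank \<Omega> t = k \<Longrightarrow> \<exists>h\<in>G. image_section \<Omega> t h"
  shows "ordered_ut \<Omega> G k"
  unfolding ordered_ut_altdef
proof (intro allI impI)
  fix a P
  assume a: "\<forall>i<k. a i \<in> \<Omega>" and inj: "inj_on a {0..<k}" and P: "ordered_partition \<Omega> k P"
  obtain c where c: "\<And>x. x \<in> \<Omega> \<Longrightarrow> c x < k \<and> x \<in> P (c x)"
    using ordered_partition_index[OF P] by blast
  define t where "t = (\<lambda>x\<in>\<Omega>. a (c x))"
  have part_sub: "P i \<subseteq> \<Omega>" if "i < k" for i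
    using P that by (auto simp: ordered_partition_def)
  have t_part: "t x = a i" if "i < k" "x \<in> P i" for i x
  proof -
    have "x \<in> \<Omega>"
      using that part_sub by blast
    moreover from this have "c x = i"
      using c ordered_partition_part_unique[OF P] that by blast
    ultimately show ?thesis
      by (simp add: t_def)
  qed
  have "t \<in> \<Omega> \<rightarrow>\<^sub>E \<Omega>"
    using a c unfolding t_def by auto
  moreover have "t ` \<Omega> = a ` {0..<k}"
  proof
    show "t ` \<Omega> \<subseteq> a ` {0..<k}"
      using c unfolding t_def by auto
    show "a ` {0..<k} \<subseteq> t ` \<Omega>"
    proof
      fix y assume "y \<in> a ` {0..<k}"
      then obtain i x where "i < k" "y = a i" "x \<in> P i"
        using P unfolding ordered_partition_def by fastforce
      moreover from this have "x \<in> \<Omega>"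
        using part_sub by blast
      ultimately show "y \<in> t ` \<Omega>"
        using t_part by force
    qed
  qed
  moreover from this have "rank \<Omega> t = k"
    using card_image[OF inj] by (simp add: rank_def)
  ultimately obtain h where h: "h \<in> G" "image_section \<Omega> t h"
    using sections by blast
  have "h (a i) \<in> P i" if "i < k" for i
  proof -
    have "h (a i) \<in> \<Omega>" and "t (h (a i)) = a i"
      using h(2) \<open>t ` \<Omega> = a ` {0..<k}\<close> that unfolding image_section_def by auto
    moreover have "t (h (a i)) = a (c (h (a i)))" and "c (h (a i)) < k"
      using c \<open>h (a i) \<in> \<Omega>\<close> t_def by auto
    ultimately have "c (h (a i)) = i"
      using inj that by (simp add: inj_on_def)
    then show ?thesis
      using c \<open>h (a i) \<in> \<Omega>\<close> by metis
  qed
  then show "\<exists>g\<in>G. \<forall>i<k. g (a i) \<in> P i"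
    using h(1) by blast
qed

context
  fixes \<Omega> :: "'a set" and G :: "('a \<Rightarrow> 'a) set"
  assumes G: "subgroup G (BijGroup \<Omega>)" and fin: "finite \<Omega>"
begin

lemma gen_semigroup_insert_idempotent_factor:
  assumes t: "t \<in> \<Omega> \<rightarrow>\<^sub>E \<Omega>" and ut: "ordered_ut \<Omega> G (rank \<Omega> t)"
    and s: "s \<in> gen_semigroup \<Omega> (G \<union> {t})"
  obtains e g where "e \<in> gen_semigroup \<Omega> (G \<union> {t})" "rmult \<Omega> e e = e" "g \<in> G" "s = rmult \<Omega> e g"
proof -
  let ?S = "gen_semigroup \<Omega> (G \<union> {t})"
  have sE: "s \<in> \<Omega> \<rightarrow>\<^sub>E \<Omega>" and "s \<in> G \<or> rank \<Omega> s \<le> rank \<Omega> t"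
    using gen_semigroup_insert_cases[OF G fin t s] by auto
  then consider "s \<in> G" | "rank \<Omega> s \<le> rank \<Omega> t"
    by blast
  then show thesis
  proof cases
    case 1
    let ?id = "\<lambda>x\<in>\<Omega>. x"
    have "?id \<in> ?S"
      using subgroup_BijGroup_id[OF G] by (blast intro: gen_semigroup.gen_base)
    moreover have "rmult \<Omega> ?id ?id = ?id"
      by (rule rmult_eqI) auto
    moreover have "s = rmult \<Omega> ?id s"
      using sE by (intro rmult_eqI[symmetric]) (auto simp: PiE_iff)
    ultimately show thesis
      using that 1 by blast
  next
    case 2
    have "rank \<Omega> t \<le> card \<Omega>"
      unfolding rank_def using fin by (rule card_image_le)
    then have "ordered_ut \<Omega> G (rank \<Omega> s)"
      using ordered_ut_antimono[OF fin 2] ut by blast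
    moreover have "s ` \<Omega> \<subseteq> \<Omega>"
      using sE by (auto simp: PiE_iff)
    ultimately obtain h where h: "h \<in> G" "image_section \<Omega> s h"
      using ordered_ut_imp_image_section fin by blast
    obtain g where "g \<in> G" "\<And>x. x \<in> \<Omega> \<Longrightarrow> g (h x) = x"
      using subgroup_BijGroup_inverse[OF G h(1)] by blast
    moreover have "rmult \<Omega> s h \<in> ?S"
      using s h(1) by (blast intro: gen_semigroup.intros)
    ultimately show thesis
      using that idempotent_rmult_image_section[OF h(2)] rmult_image_section_inverse[OF sE h(2)]
      by metis
  qed
qed

lemma ordered_ut_imp_gen_semigroup_eq:
  assumes t: "t \<in> \<Omega> \<rightarrow>\<^sub>E \<Omega>" and ut: "ordered_ut \<Omega> G (rank \<Omega> t)"
  shows "gen_semigroup \<Omega> (G \<union> {t}) = setprod \<Omega> (idempotents \<Omega> (gen_semigroup \<Omega> (G \<union> {t}))) G"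
proof
  show "gen_semigroup \<Omega> (G \<union> {t}) \<subseteq> setprod \<Omega> (idempotents \<Omega> (gen_semigroup \<Omega> (G \<union> {t}))) G"
    using gen_semigroup_insert_idempotent_factor[OF t ut]
    unfolding setprod_def idempotents_def by blast
  show "setprod \<Omega> (idempotents \<Omega> (gen_semigroup \<Omega> (G \<union> {t}))) G \<subseteq> gen_semigroup \<Omega> (G \<union> {t})"
    unfolding setprod_def idempotents_def by (blast intro: gen_semigroup.intros)
qed

lemma setprod_idempotents_imp_ordered_ut:
  assumes EG: "\<And>t. t \<in> \<Omega> \<rightarrow>\<^sub>E \<Omega> \<Longrightarrow> rank \<Omega> t = k \<Longrightarrow>
    t \<in> setprod \<Omega> (idempotents \<Omega> (gen_semigroup \<Omega> (G \<union> {t}))) G"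
  shows "ordered_ut \<Omega> G k"
proof (rule image_sections_imp_ordered_ut)
  fix t assume t: "t \<in> \<Omega> \<rightarrow>\<^sub>E \<Omega>" and "rank \<Omega> t = k"
  then obtain e g where e: "e \<in> gen_semigroup \<Omega> (G \<union> {t})" "rmult \<Omega> e e = e"
    and g: "g \<in> G" and teg: "t = rmult \<Omega> e g"
    using EG unfolding setprod_def idempotents_def by blast
  have "e ` \<Omega> \<subseteq> \<Omega>"
    using gen_semigroup_insert_cases[OF G fin t e(1)] by (auto simp: PiE_iff)
  moreover obtain h where "h \<in> G" "\<And>x. x \<in> \<Omega> \<Longrightarrow> h (g x) = x"
    using subgroup_BijGroup_inverse[OF G g] by blast
  ultimately show "\<exists>h\<in>G. image_section \<Omega> t h"
    using image_section_rmult_idempotent[OF _ e(2)] teg by blast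
qed

end

theorem lemma3p1:
  fixes \<Omega> :: "'a set" and G :: "('a \<Rightarrow> 'a) set" and k :: nat
  assumes "finite \<Omega>"
    and "subgroup G (BijGroup \<Omega>)"
    and "1 \<le> k" and "k \<le> card \<Omega>"
  shows "ordered_ut \<Omega> G k \<longleftrightarrow>
    (\<forall>t \<in> \<Omega> \<rightarrow>\<^sub>E \<Omega>. rank \<Omega> t = k \<longrightarrow>
       gen_semigroup \<Omega> (G \<union> {t}) =
         setprod \<Omega> (idempotents \<Omega> (gen_semigroup \<Omega> (G \<union> {t}))) G)"
proof
  assume "ordered_ut \<Omega> G k"
  then show "\<forall>t \<in> \<Omega> \<rightarrow>\<^sub>E \<Omega>. rank \<Omega> t = k \<longrightarrow>
      gen_semigroup \<Omega> (G \<union> {t}) = setprod \<Omega> (idempotents \<Omega> (gen_semigroup \<Omega> (G \<union> {t}))) G"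
    using ordered_ut_imp_gen_semigroup_eq[OF assms(2,1)] by blast
next
  assume "\<forall>t \<in> \<Omega> \<rightarrow>\<^sub>E \<Omega>. rank \<Omega> t = k \<longrightarrow>
      gen_semigroup \<Omega> (G \<union> {t}) = setprod \<Omega> (idempotents \<Omega> (gen_semigroup \<Omega> (G \<union> {t}))) G"
  then show "ordered_ut \<Omega> G k"
    by (intro setprod_idempotents_imp_ordered_ut[OF assms(2,1)]) (blast intro: gen_semigroup.gen_base)
qed

end
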